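(* Let $\mathcal{R}$ be a right amenable cell space with finite stabiliser $G_0$, let $(\mathcal{R},Q,N,\delta)$ be a semi-cellular automaton with $Q$ finite and nonempty and $N$ finite, with global transition function $\Delta$, and let $\mathcal{F}=(F_i)_{i\in I}$ be a right Følner net in $\mathcal{R}$. Then for every subset $X\subseteq Q^M$ we have $\mathrm{h}_{\mathcal{F}}(\Delta(X))\leq\mathrm{h}_{\mathcal{F}}(X)$.
   Context: A cell space $\mathcal{R}$ consists of a group $G$ acting transitively on the left on a nonempty set $M$ via $\triangleright$, a point $m_0\in M$ and a family $(g_{m_0,m})_{m\in M}$ in $G$ with $g_{m_0,m}\triangleright m_0=m$. $G_0$ is the stabiliser of $m_0$, $G/G_0$ the set of left cosets, with $G$ acting by $g\cdot hG_0=ghG_0$. The right semi-action $\triangleleft\colon M\times G/G_0\to M$ is $m\triangleleft gG_0=g_{m_0,m}g\triangleright m_0$. $\mathcal{R}$ is right amenable if there is a finitely additive probability measure $\mu$ on the power set of $M$ such that $\mu(\{a\triangleleft\mathfrak{g}:a\in A\})=\mu(A)$ whenever $\mathfrak{g}\in G/G_0$, $A\subseteq M$ and $m\mapsto m\triangleleft\mathfrak{g}$ is injective on $A$. A right Følner net in $\mathcal{R}$ is a net $(F_i)_{i\in I}$ (over a directed set) of nonempty finite subsets of $M$ with $\lim_{i}\frac{|F_i\setminus\{m: m\triangleleft\mathfrak{g}\in F_i\}|}{|F_i|}=0$ for every $\mathfrak{g}\in G/G_0$. A semi-cellular automaton is $(\mathcal{R},Q,N,\delta)$ with $Q$ a set,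 $N\subseteq G/G_0$ with $G_0\cdot N\subseteq N$, $\delta\colon Q^N\to Q$; its global transition function is $\Delta\colon Q^M\to Q^M$, $\Delta(c)(m)=\delta(n\mapsto c(m\triangleleft n))$. For $A\subseteq M$, $\pi_A\colon Q^M\to Q^A$ is restriction. For $X\subseteq Q^M$ and a net $\mathcal{F}=(F_i)_{i\in I}$ of nonempty finite subsets of $M$, the entropy is $\mathrm{h}_{\mathcal{F}}(X)=\limsup_{i\in I}\frac{\log|\pi_{F_i}(X)|}{|F_i|}$. *)

theory Defs
  imports "HOL-Analysis.Analysis" "HOL-Algebra.Group_Action" "HOL-Library.FuncSet"
begin

text \<open>The set M of cells is the whole (nonempty) type 'm. The group G is a HOL-Algebra
group; the left action of G on M is act, a group action in the sense of HOL-Algebra.\<close>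

definition cell_space ::
  "('g, 'z) monoid_scheme \<Rightarrow> ('g \<Rightarrow> 'm \<Rightarrow> 'm) \<Rightarrow> 'm \<Rightarrow> ('m \<Rightarrow> 'g) \<Rightarrow> bool" where
  "cell_space G act m0 gf \<longleftrightarrow>
     group_action G (UNIV :: 'm set) act \<and>
     (\<forall>m m'. \<exists>g\<in>carrier G. act g m = m') \<and>
     (\<forall>m. gf m \<in> carrier G \<and> act (gf m) m0 = m)"

definition stab0 :: "('g, 'z) monoid_scheme \<Rightarrow> ('g \<Rightarrow> 'm \<Rightarrow> 'm) \<Rightarrow> 'm \<Rightarrow> 'g set" where
  "stab0 G act m0 = stabilizer G act m0"

definition cosets0 :: "('g, 'z) monoid_scheme \<Rightarrow> ('g \<Rightarrow> 'm \<Rightarrow> 'm) \<Rightarrow> 'm \<Rightarrow> 'g set set" where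
  "cosets0 G act m0 = {g <#\<^bsub>G\<^esub> stab0 G act m0 | g. g \<in> carrier G}"

text \<open>Right semi-action m \<triangleleft> gG_0 = g_{m0,m} g \<triangleright> m0 (independent of the representative g).\<close>
definition semi_act ::
  "('g, 'z) monoid_scheme \<Rightarrow> ('g \<Rightarrow> 'm \<Rightarrow> 'm) \<Rightarrow> 'm \<Rightarrow> ('m \<Rightarrow> 'g) \<Rightarrow> 'm \<Rightarrow> 'g set \<Rightarrow> 'm" where
  "semi_act G act m0 gf m c =
     act (gf m \<otimes>\<^bsub>G\<^esub> (SOME g. g \<in> carrier G \<and> c = g <#\<^bsub>G\<^esub> stab0 G act m0)) m0"

definition right_amenable ::
  "('g, 'z) monoid_scheme \<Rightarrow> ('g \<Rightarrow> 'm \<Rightarrow> 'm) \<Rightarrow> 'm \<Rightarrow> ('m \<Rightarrow> 'g) \<Rightarrow> bool" where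
  "right_amenable G act m0 gf \<longleftrightarrow>
     (\<exists>\<mu> :: 'm set \<Rightarrow> real.
        (\<forall>A. 0 \<le> \<mu> A) \<and> \<mu> UNIV = 1 \<and>
        (\<forall>A B. A \<inter> B = {} \<longrightarrow> \<mu> (A \<union> B) = \<mu> A + \<mu> B) \<and>
        (\<forall>c\<in>cosets0 G act m0. \<forall>A. inj_on (\<lambda>m. semi_act G act m0 gf m c) A \<longrightarrow>
            \<mu> ((\<lambda>a. semi_act G act m0 gf a c) ` A) = \<mu> A))"

text \<open>Directed sets: the index set is the whole type 'i with a preorder leq in which every
two elements have an upper bound. Convergence along a net is convergence w.r.t. the
filter of tails.\<close>
definition directed_set :: "('i \<Rightarrow> 'i \<Rightarrow> bool) \<Rightarrow> bool" where
  "directed_set leq \<longleftrightarrow> (\<forall>i. leq i i) \<and> (\<forall>i j k. leq i j \<longrightarrow> leq j k \<longrightarrow> leq i k) \<and>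
                        (\<forall>i j. \<exists>k. leq i k \<and> leq j k)"

definition net_filter :: "('i \<Rightarrow> 'i \<Rightarrow> bool) \<Rightarrow> 'i filter" where
  "net_filter leq = (INF i. principal {j. leq i j})"

definition right_folner_net ::
  "('g, 'z) monoid_scheme \<Rightarrow> ('g \<Rightarrow> 'm \<Rightarrow> 'm) \<Rightarrow> 'm \<Rightarrow> ('m \<Rightarrow> 'g) \<Rightarrow>
   ('i \<Rightarrow> 'i \<Rightarrow> bool) \<Rightarrow> ('i \<Rightarrow> 'm set) \<Rightarrow> bool" where
  "right_folner_net G act m0 gf leq F \<longleftrightarrow>
     directed_set leq \<and> (\<forall>i. finite (F i) \<and> F i \<noteq> {}) \<and>
     (\<forall>c\<in>cosets0 G act m0.
        ((\<lambda>i. real (card (F i - {m. semi_act G act m0 gf m c \<in> F i})) / real (card (F i)))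
          \<longlongrightarrow> 0) (net_filter leq))"

text \<open>Semi-cellular automaton (R, Q, N, delta); Q^N is represented by the
extensional functions from N to Q.\<close>
definition semi_cellular_automaton ::
  "('g, 'z) monoid_scheme \<Rightarrow> ('g \<Rightarrow> 'm \<Rightarrow> 'm) \<Rightarrow> 'm \<Rightarrow> ('m \<Rightarrow> 'g) \<Rightarrow>
   'q set \<Rightarrow> 'g set set \<Rightarrow> (('g set \<Rightarrow> 'q) \<Rightarrow> 'q) \<Rightarrow> bool" where
  "semi_cellular_automaton G act m0 gf Q N \<delta> \<longleftrightarrow>
     cell_space G act m0 gf \<and> N \<subseteq> cosets0 G act m0 \<and>
     (\<forall>g\<in>stab0 G act m0. \<forall>n\<in>N. g <#\<^bsub>G\<^esub> n \<in> N) \<and>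
     (\<forall>u\<in>N \<rightarrow>\<^sub>E Q. \<delta> u \<in> Q)"

definition global_transition ::
  "('g, 'z) monoid_scheme \<Rightarrow> ('g \<Rightarrow> 'm \<Rightarrow> 'm) \<Rightarrow> 'm \<Rightarrow> ('m \<Rightarrow> 'g) \<Rightarrow>
   'g set set \<Rightarrow> (('g set \<Rightarrow> 'q) \<Rightarrow> 'q) \<Rightarrow> ('m \<Rightarrow> 'q) \<Rightarrow> ('m \<Rightarrow> 'q)" where
  "global_transition G act m0 gf N \<delta> c = (\<lambda>m. \<delta> (\<lambda>n\<in>N. c (semi_act G act m0 gf m n)))"

definition entropy :: "('i \<Rightarrow> 'i \<Rightarrow> bool) \<Rightarrow> ('i \<Rightarrow> 'm set) \<Rightarrow> ('m \<Rightarrow> 'q) set \<Rightarrow> ereal" where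
  "entropy leq F X = Limsup (net_filter leq)
     (\<lambda>i. ereal (ln (real (card ((\<lambda>c. restrict c (F i)) ` X))) / real (card (F i))))"

end

theory Submission
  imports Defs
begin

text \<open>The image \<open>\<Delta>(c)\<close> restricted to \<open>F\<close> is determined by \<open>c\<close> on \<open>F \<union> E\<close>, where
  \<open>E = F \<triangleleft> N - F\<close> is the boundary of \<open>F\<close>. Hence \<open>|\<pi>\<^sub>F(\<Delta>(X))| \<le> |\<pi>\<^sub>F(X)| \<cdot> |Q|\<^bsup>|E|\<^esup>\<close>,
  and \<open>|E| \<le> \<Sum>\<^sub>n\<^sub>\<in>\<^sub>N |F - {m. m \<triangleleft> n \<in> F}|\<close>, which along a right F{\o}lner net is
  \<open>o(|F|)\<close>. Taking logarithms, dividing by \<open>|F|\<close> and passing to the limsup gives the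
  inequality.\<close>

lemma card_image_le_card_image_if_factors:
  assumes "finite (g ` A)" and "\<And>x y. x \<in> A \<Longrightarrow> y \<in> A \<Longrightarrow> g x = g y \<Longrightarrow> f x = f y"
  shows "card (f ` A) \<le> card (g ` A)"
proof -
  have "f x = f (inv_into A g (g x))" if "x \<in> A" for x
    using that by (intro assms(2) inv_into_into f_inv_into_f[symmetric]) auto
  then have "f ` A = (\<lambda>b. f (inv_into A g b)) ` g ` A"
    by (simp add: image_image cong: image_cong)
  then show ?thesis
    using assms(1) by (simp add: card_image_le)
qed

lemma card_restrict_image_le:
  fixes T :: "('a \<Rightarrow> 'q) \<Rightarrow> ('a \<Rightarrow> 'q)"
  assumes "finite F" "finite E" "finite Q" "X \<subseteq> UNIV \<rightarrow> Q"
    and local: "\<And>x y. x \<in> X \<Longrightarrow> y \<in> X \<Longrightarrow> (\<forall>m\<in>F \<union> E. x m = y m) \<Longrightarrow> (\<forall>m\<in>F. T x m = T y m)"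
  shows "card ((\<lambda>c. restrict c F) ` T ` X) \<le> card ((\<lambda>c. restrict c F) ` X) * card Q ^ card E"
proof -
  let ?P = "\<lambda>x. (restrict x F, restrict x E)"
  have restr_sub: "(\<lambda>c. restrict c F) ` X \<subseteq> F \<rightarrow>\<^sub>E Q"
    using assms(4) by (auto simp: PiE_def Pi_def)
  have P_sub: "?P ` X \<subseteq> (\<lambda>c. restrict c F) ` X \<times> (E \<rightarrow>\<^sub>E Q)"
    using assms(4) by (auto simp: PiE_def Pi_def)
  have fin: "finite ((\<lambda>c. restrict c F) ` X \<times> (E \<rightarrow>\<^sub>E Q))"
    using finite_subset[OF restr_sub] assms(1-3) by (simp add: finite_PiE)
  have "card ((\<lambda>c. restrict c F) ` T ` X) = card ((\<lambda>x. restrict (T x) F) ` X)"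
    by (simp add: image_image)
  also have "\<dots> \<le> card (?P ` X)"
  proof (rule card_image_le_card_image_if_factors)
    show "finite (?P ` X)"
      using finite_subset[OF P_sub fin] .
    fix x y assume "x \<in> X" "y \<in> X" "?P x = ?P y"
    then have "restrict x F = restrict y F" "restrict x E = restrict y E"
      by simp_all
    then have "\<forall>m\<in>F \<union> E. x m = y m"
      by (metis Un_iff restrict_apply')
    then have "\<forall>m\<in>F. T x m = T y m"
      using local \<open>x \<in> X\<close> \<open>y \<in> X\<close> by blast
    then show "restrict (T x) F = restrict (T y) F"
      by (auto simp: restrict_def)
  qed
  also have "\<dots> \<le> card ((\<lambda>c. restrict c F) ` X \<times> (E \<rightarrow>\<^sub>E Q))"
    using P_sub fin by (rule card_mono[rotated])
  also have "\<dots> = card ((\<lambda>c. restrict c F) ` X) * card Q ^ card E"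
    using assms(2) by (simp add: card_cartesian_product card_PiE)
  finally show ?thesis .
qed

text \<open>For \<open>a = 0\<close> this still holds since \<open>ln 0 = 0\<close> and \<open>ln\<close> is nonnegative on naturals.\<close>
lemma ln_le_ln_plus_of_le_mult_power:
  fixes a b q k :: nat
  assumes "a \<le> b * q ^ k" and "q > 0"
  shows "ln (real a) \<le> ln (real b) + ln (real q) * real k"
proof (cases "a = 0")
  case True
  have "ln (real b) \<ge> 0" by (cases "b = 0") auto
  with True \<open>q > 0\<close> show ?thesis by simp
next
  case False
  then have "b > 0" using assms by (cases "b = 0") auto
  have "real a \<le> real b * real q ^ k"
    using assms(1) by (metis of_nat_le_iff of_nat_mult of_nat_power)
  then have "ln (real a) \<le> ln (real b * real q ^ k)"
    using False \<open>b > 0\<close> \<open>q > 0\<close> by simp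
  also have "\<dots> = ln (real b) + ln (real q) * real k"
    using \<open>b > 0\<close> \<open>q > 0\<close> by (simp add: ln_mult ln_realpow mult.commute)
  finally show ?thesis .
qed

lemma card_boundary_le:
  fixes s :: "'a \<Rightarrow> 'n \<Rightarrow> 'a"
  assumes "finite N" "finite F"
  shows "card ((\<Union>n\<in>N. (\<lambda>m. s m n) ` F) - F) \<le> (\<Sum>n\<in>N. card (F - {m. s m n \<in> F}))"
proof -
  have "card ((\<Union>n\<in>N. (\<lambda>m. s m n) ` F) - F) = card (\<Union>n\<in>N. (\<lambda>m. s m n) ` F - F)"
    by (rule arg_cong[where f = card]) blast
  also have "\<dots> \<le> (\<Sum>n\<in>N. card ((\<lambda>m. s m n) ` F - F))"
    using assms(1) by (rule card_UN_le)
  also have "\<dots> \<le> (\<Sum>n\<in>N. card (F - {m. s m n \<in> F}))"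
  proof (rule sum_mono)
    fix n
    have "(\<lambda>m. s m n) ` F - F \<subseteq> (\<lambda>m. s m n) ` (F - {m. s m n \<in> F})" by auto
    then have "card ((\<lambda>m. s m n) ` F - F) \<le> card ((\<lambda>m. s m n) ` (F - {m. s m n \<in> F}))"
      using assms(2) by (intro card_mono) auto
    also have "\<dots> \<le> card (F - {m. s m n \<in> F})"
      by (rule card_image_le) (use assms(2) in auto)
    finally show "card ((\<lambda>m. s m n) ` F - F) \<le> card (F - {m. s m n \<in> F})" .
  qed
  finally show ?thesis .
qed

lemma global_transition_cong:
  assumes "\<forall>n\<in>N. x (semi_act G act m0 gf m n) = y (semi_act G act m0 gf m n)"
  shows "global_transition G act m0 gf N \<delta> x m = global_transition G act m0 gf N \<delta> y m"
  using assms unfolding global_transition_def by (metis (no_types, lifting) restrict_ext)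

lemma ln_card_restrict_global_transition_le:
  fixes F :: "'m set" and X :: "('m \<Rightarrow> 'q) set"
  assumes "finite F" "F \<noteq> {}" "finite N" "finite Q" "Q \<noteq> {}" "X \<subseteq> UNIV \<rightarrow> Q"
  shows "ln (real (card ((\<lambda>c. restrict c F) ` global_transition G act m0 gf N \<delta> ` X))) / real (card F)
    \<le> ln (real (card ((\<lambda>c. restrict c F) ` X))) / real (card F)
       + ln (real (card Q)) * (\<Sum>n\<in>N. real (card (F - {m. semi_act G act m0 gf m n \<in> F})) / real (card F))"
proof -
  define E where "E = (\<Union>n\<in>N. (\<lambda>m. semi_act G act m0 gf m n) ` F) - F"
  have "finite E" unfolding E_def using assms(1,3) by auto
  have "card Q > 0" using assms(4,5) by (simp add: card_gt_0_iff)
  have "card ((\<lambda>c. restrict c F) ` global_transition G act m0 gf N \<delta> ` X)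
      \<le> card ((\<lambda>c. restrict c F) ` X) * card Q ^ card E"
  proof (rule card_restrict_image_le[OF assms(1) \<open>finite E\<close> assms(4,6)])
    fix x y :: "'m \<Rightarrow> 'q" assume "\<forall>m\<in>F \<union> E. x m = y m"
    moreover have "semi_act G act m0 gf m n \<in> F \<union> E" if "m \<in> F" "n \<in> N" for m n
      using that unfolding E_def by auto
    ultimately show "\<forall>m\<in>F. global_transition G act m0 gf N \<delta> x m = global_transition G act m0 gf N \<delta> y m"
      by (blast intro: global_transition_cong)
  qed
  then have "ln (real (card ((\<lambda>c. restrict c F) ` global_transition G act m0 gf N \<delta> ` X)))
      \<le> ln (real (card ((\<lambda>c. restrict c F) ` X))) + ln (real (card Q)) * real (card E)"
    using \<open>card Q > 0\<close> by (rule ln_le_ln_plus_of_le_mult_power)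
  moreover have "real (card E) \<le> (\<Sum>n\<in>N. real (card (F - {m. semi_act G act m0 gf m n \<in> F})))"
    unfolding E_def using card_boundary_le[OF assms(3,1)] by (simp flip: of_nat_sum)
  then have "ln (real (card Q)) * real (card E)
      \<le> ln (real (card Q)) * (\<Sum>n\<in>N. real (card (F - {m. semi_act G act m0 gf m n \<in> F})))"
    using \<open>card Q > 0\<close> by (intro mult_left_mono) auto
  ultimately have "ln (real (card ((\<lambda>c. restrict c F) ` global_transition G act m0 gf N \<delta> ` X)))
      \<le> ln (real (card ((\<lambda>c. restrict c F) ` X)))
         + ln (real (card Q)) * (\<Sum>n\<in>N. real (card (F - {m. semi_act G act m0 gf m n \<in> F})))"
    by linarith
  moreover have "x / c \<le> y / c + l * (S / c)" if "x \<le> y + l * S" "c > 0" for x y l S c :: real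
    using divide_right_mono[OF that(1), of c] that(2) by (simp add: add_divide_distrib)
  moreover have "card F > 0" using assms(1,2) by (simp add: card_gt_0_iff)
  ultimately show ?thesis
    unfolding sum_divide_distrib[symmetric] by simp
qed

lemma Limsup_le_Limsup_if_le_plus_vanishing:
  fixes a b r :: "'i \<Rightarrow> real"
  assumes "eventually (\<lambda>i. b i \<le> a i + r i) F" and "(r \<longlongrightarrow> 0) F"
  shows "Limsup F (\<lambda>i. ereal (b i)) \<le> Limsup F (\<lambda>i. ereal (a i))"
proof (cases "F = bot")
  case False
  show ?thesis
  proof (rule ereal_le_epsilon2)
    fix e :: real assume "0 < e"
    have "eventually (\<lambda>i. ereal (b i) \<le> ereal (a i) + ereal e) F"
      using assms(1) order_tendstoD(2)[OF assms(2) \<open>0 < e\<close>] by eventually_elim simp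
    then have "Limsup F (\<lambda>i. ereal (b i)) \<le> Limsup F (\<lambda>i. ereal (a i) + ereal e)"
      by (rule Limsup_mono)
    also have "\<dots> = Limsup F (\<lambda>i. ereal (a i)) + ereal e"
      by (rule Limsup_add_ereal_right[OF False]) simp
    finally show "Limsup F (\<lambda>i. ereal (b i)) \<le> Limsup F (\<lambda>i. ereal (a i)) + ereal e" .
  qed
qed simp

lemma right_folner_netD:
  assumes "right_folner_net G act m0 gf leq F"
  shows "finite (F i)" and "F i \<noteq> {}"
    and "c \<in> cosets0 G act m0 \<Longrightarrow> ((\<lambda>i. real (card (F i - {m. semi_act G act m0 gf m c \<in> F i}))
           / real (card (F i))) \<longlongrightarrow> 0) (net_filter leq)"
  using assms unfolding right_folner_net_def by simp_all

theorem theorem3: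
  fixes G :: "('g, 'z) monoid_scheme" and act :: "'g \<Rightarrow> 'm \<Rightarrow> 'm" and m0 :: 'm
    and gf :: "'m \<Rightarrow> 'g" and Q :: "'q set" and N :: "'g set set"
    and \<delta> :: "('g set \<Rightarrow> 'q) \<Rightarrow> 'q" and leq :: "'i \<Rightarrow> 'i \<Rightarrow> bool" and F :: "'i \<Rightarrow> 'm set"
    and X :: "('m \<Rightarrow> 'q) set"
  assumes "cell_space G act m0 gf"
    and "right_amenable G act m0 gf"
    and "finite (stab0 G act m0)"
    and "semi_cellular_automaton G act m0 gf Q N \<delta>"
    and "finite Q" and "Q \<noteq> {}" and "finite N"
    and "right_folner_net G act m0 gf leq F"
    and "X \<subseteq> (UNIV \<rightarrow> Q)"
  shows "entropy leq F (global_transition G act m0 gf N \<delta> ` X) \<le> entropy leq F X"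
proof -
  define defect where "defect n i =
    real (card (F i - {m. semi_act G act m0 gf m n \<in> F i})) / real (card (F i))" for n i
  have "N \<subseteq> cosets0 G act m0"
    using assms(4) by (simp add: semi_cellular_automaton_def)
  then have "(defect n \<longlongrightarrow> 0) (net_filter leq)" if "n \<in> N" for n
    unfolding defect_def using that by (intro right_folner_netD(3)[OF assms(8)]) blast
  then have "((\<lambda>i. \<Sum>n\<in>N. defect n i) \<longlongrightarrow> (\<Sum>n\<in>N. 0)) (net_filter leq)"
    by (rule tendsto_sum)
  then have vanishing: "((\<lambda>i. ln (real (card Q)) * (\<Sum>n\<in>N. defect n i)) \<longlongrightarrow> 0) (net_filter leq)"
    by (intro tendsto_mult_right_zero) simp
  have "\<forall>\<^sub>F i in net_filter leq.
      ln (real (card ((\<lambda>c. restrict c (F i)) ` global_transition G act m0 gf N \<delta> ` X))) / real (card (F i))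
      \<le> ln (real (card ((\<lambda>c. restrict c (F i)) ` X))) / real (card (F i))
         + ln (real (card Q)) * (\<Sum>n\<in>N. defect n i)"
    unfolding defect_def
    by (rule always_eventually, rule allI,
        rule ln_card_restrict_global_transition_le[OF right_folner_netD(1,2)[OF assms(8)] assms(7,5,6,9)])
  then show ?thesis
    unfolding entropy_def using vanishing by (rule Limsup_le_Limsup_if_le_plus_vanishing)
qed

end
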